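(* For every finite subset $B\subseteq A$ and every $c\in A\setminus\mathrm{Cl}(B)$, there exists a permutation $\pi\in\mathcal{G}$ that fixes $B$ pointwise and satisfies $\pi(c)\neq c$.
   Context: Let $\langle P,\preccurlyeq,\preccurlyeq^\ast\rangle$ be a doubly ordered set: $\preccurlyeq$ a partial order on $P$, $\preccurlyeq^\ast$ a preorder on $P$, and $p\preccurlyeq q\Rightarrow p\preccurlyeq^\ast q$. Write $p\prec q$ for ($p\preccurlyeq q$ and $p\neq q$). For a quadruple $\langle x_0,x_1,x_2,x_3\rangle$ and $i<4$, $\mathrm{pr}_i(\langle x_0,x_1,x_2,x_3\rangle)=x_i$. For a set $S$, $\mathscr{S}(S)$ is the set of permutations of $S$. Define recursively $A_0=\{\langle0,p,\varnothing,k\rangle\mid p\in P,k\in\omega\}$ and $A_{n+1}=A_n\cup\{\langle n+1,q,a,0\rangle\mid q\in P,a\in A_n,\mathrm{pr}_1(a)\prec q\}\cup\{\langle n+1,q,a,k\rangle\mid q\in P,a\in A_n,\mathrm{pr}_1(a)\not\preccurlyeq q,\mathrm{pr}_1(a)\preccurlyeq^\ast q,k\in\omega\}$; let $A=\bigcup_{n}A_n$. Define $\mathcal{G}_0=\{f\in\mathscr{S}(A_0)\mid \mathrm{pr}_1(f(a))=\mathrm{pr}_1(a)\text{ for all }a\in A_0\}$; for $f\in\mathscr{S}(A_{n+1})$, $f\in\mathcal{G}_{n+1}$ iff $f{\upharpoonright}A_n\in\mathcal{G}_n$ and for all $b\in A_{n+1}\setminus A_n$, $\mathrm{pr}_1(f(b))=\mathrm{pr}_1(b)$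 and $\mathrm{pr}_2(f(b))=f(\mathrm{pr}_2(b))$. Let $\mathcal{G}=\{\pi\in\mathscr{S}(A)\mid \pi{\upharpoonright}A_n\in\mathcal{G}_n\text{ for all }n\}$. A subset $C\subseteq A$ is closed if (i) for all $n\in\omega$, all $a\in C\cap A_n$ and all $q\in P$ with $\mathrm{pr}_1(a)\prec q$, we have $\langle n+1,q,a,0\rangle\in C$, and (ii) for all $b\in C\setminus A_0$, $\mathrm{pr}_2(b)\in C$. For $B\subseteq A$, $\mathrm{Cl}(B)$ is the least closed subset of $A$ including $B$. *)

theory Defs
  imports Main
begin

text \<open>Quadruples <n, p, a, k>; the third component is either the empty set
  (encoded as None) or an element a of A (encoded as Some a).\<close>
datatype 'p quad = Quad nat 'p "'p quad option" nat

fun pr0 :: "'p quad \<Rightarrow> nat" where "pr0 (Quad n p a k) = n"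
fun pr1 :: "'p quad \<Rightarrow> 'p" where "pr1 (Quad n p a k) = p"
fun pr2 :: "'p quad \<Rightarrow> 'p quad option" where "pr2 (Quad n p a k) = a"
fun pr3 :: "'p quad \<Rightarrow> nat" where "pr3 (Quad n p a k) = k"

definition strict :: "('p \<Rightarrow> 'p \<Rightarrow> bool) \<Rightarrow> 'p \<Rightarrow> 'p \<Rightarrow> bool" where
  "strict le p q \<longleftrightarrow> le p q \<and> p \<noteq> q"

fun An :: "('p \<Rightarrow> 'p \<Rightarrow> bool) \<Rightarrow> ('p \<Rightarrow> 'p \<Rightarrow> bool) \<Rightarrow> nat \<Rightarrow> 'p quad set" where
  "An le les 0 = {Quad 0 p None k | p k. True}"
| "An le les (Suc n) = An le les n
     \<union> {Quad (Suc n) q (Some a) 0 | q a. a \<in> An le les n \<and> strict le (pr1 a) q}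
     \<union> {Quad (Suc n) q (Some a) k | q a k. a \<in> An le les n \<and> \<not> le (pr1 a) q \<and> les (pr1 a) q}"

definition Aall :: "('p \<Rightarrow> 'p \<Rightarrow> bool) \<Rightarrow> ('p \<Rightarrow> 'p \<Rightarrow> bool) \<Rightarrow> 'p quad set" where
  "Aall le les = (\<Union>n. An le les n)"

text \<open>Membership of (the restriction of) f in G_n. A permutation of a set S is
  represented by a function f with bij_betw f S S (values outside S irrelevant).\<close>
fun Gn :: "('p \<Rightarrow> 'p \<Rightarrow> bool) \<Rightarrow> ('p \<Rightarrow> 'p \<Rightarrow> bool) \<Rightarrow> nat \<Rightarrow> ('p quad \<Rightarrow> 'p quad) \<Rightarrow> bool" where
  "Gn le les 0 f \<longleftrightarrow> bij_betw f (An le les 0) (An le les 0)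
      \<and> (\<forall>a\<in>An le les 0. pr1 (f a) = pr1 a)"
| "Gn le les (Suc n) f \<longleftrightarrow> bij_betw f (An le les (Suc n)) (An le les (Suc n))
      \<and> Gn le les n f
      \<and> (\<forall>b\<in>An le les (Suc n) - An le les n.
            pr1 (f b) = pr1 b \<and> pr2 (f b) = map_option f (pr2 b))"

definition Gall :: "('p \<Rightarrow> 'p \<Rightarrow> bool) \<Rightarrow> ('p \<Rightarrow> 'p \<Rightarrow> bool) \<Rightarrow> ('p quad \<Rightarrow> 'p quad) \<Rightarrow> bool" where
  "Gall le les \<pi> \<longleftrightarrow> bij_betw \<pi> (Aall le les) (Aall le les) \<and> (\<forall>n. Gn le les n \<pi>)"

definition closed_set :: "('p \<Rightarrow> 'p \<Rightarrow> bool) \<Rightarrow> ('p \<Rightarrow> 'p \<Rightarrow> bool) \<Rightarrow> 'p quad set \<Rightarrow> bool" where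
  "closed_set le les C \<longleftrightarrow> C \<subseteq> Aall le les
     \<and> (\<forall>n. \<forall>a\<in>C \<inter> An le les n. \<forall>q. strict le (pr1 a) q \<longrightarrow> Quad (Suc n) q (Some a) 0 \<in> C)
     \<and> (\<forall>b\<in>C - An le les 0. case pr2 b of Some a \<Rightarrow> a \<in> C | None \<Rightarrow> False)"

definition Cl :: "('p \<Rightarrow> 'p \<Rightarrow> bool) \<Rightarrow> ('p \<Rightarrow> 'p \<Rightarrow> bool) \<Rightarrow> 'p quad set \<Rightarrow> 'p quad set" where
  "Cl le les B = \<Inter>{C. closed_set le les C \<and> B \<subseteq> C}"

end

theory Submission
  imports Defs
begin

text \<open>Since \<open>c \<notin> Cl B\<close>, some closed set \<open>C \<supseteq> B\<close> misses \<open>c\<close>. Among the ancestors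
  of \<open>c\<close> (\<open>c\<close>, its parent \<open>pr\<^sub>2 c\<close>, and so on) take the one closest to the root that lies
  outside \<open>C\<close>, say \<open>w = \<langle>n, q, a, k\<rangle>\<close>; its parent \<open>a\<close>, if any, is in \<open>C\<close>. Closedness of \<open>C\<close>
  then rules out that \<open>w\<close> is a forced child \<open>\<langle>n, q, a, 0\<rangle>\<close> with \<open>pr\<^sub>1 a \<prec> q\<close>, so every
  \<open>\<langle>n, q, a, k'\<rangle>\<close> lies in \<open>A\<close>. Choose \<open>k' \<noteq> k\<close> that is the last component of no ancestor
  of an element of the finite set \<open>B\<close>, and let \<open>\<pi>\<close> exchange the subtree above \<open>w\<close> with the
  one above its sibling \<open>v = \<langle>n, q, a, k'\<rangle>\<close>. This involution preserves levels, labels and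
  parent links, hence lies in \<open>\<G>\<close>; it fixes \<open>B\<close>, because neither \<open>w\<close> (outside \<open>C\<close>) nor \<open>v\<close>
  is an ancestor of an element of \<open>B\<close>, and it moves \<open>c\<close>, an ancestor of which is \<open>w\<close>.\<close>

fun in_A :: "('p \<Rightarrow> 'p \<Rightarrow> bool) \<Rightarrow> ('p \<Rightarrow> 'p \<Rightarrow> bool) \<Rightarrow> 'p quad \<Rightarrow> bool" where
  "in_A le les (Quad 0 p None k) = True"
| "in_A le les (Quad (Suc n) q (Some a) k) = (in_A le les a \<and> pr0 a \<le> n \<and>
     ((k = 0 \<and> strict le (pr1 a) q) \<or> (\<not> le (pr1 a) q \<and> les (pr1 a) q)))"
| "in_A le les _ = False"

lemma mem_An_iff: "x \<in> An le les m \<longleftrightarrow> in_A le les x \<and> pr0 x \<le> m"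
proof (induction m arbitrary: x)
  case 0
  then show ?case by (cases x) (auto elim: in_A.elims)
next
  case (Suc m)
  show ?case
  proof
    assume "x \<in> An le les (Suc m)"
    then consider "x \<in> An le les m"
      | q a where "x = Quad (Suc m) q (Some a) 0" "a \<in> An le les m" "strict le (pr1 a) q"
      | q a k where "x = Quad (Suc m) q (Some a) k" "a \<in> An le les m"
          "\<not> le (pr1 a) q" "les (pr1 a) q"
      by (simp only: An.simps Un_iff mem_Collect_eq) blast
    then show "in_A le les x \<and> pr0 x \<le> Suc m"
      by cases (use Suc.IH in auto)
  next
    assume x: "in_A le les x \<and> pr0 x \<le> Suc m"
    show "x \<in> An le les (Suc m)"
    proof (cases "pr0 x \<le> m")
      case True
      then show ?thesis using Suc.IH x by auto
    next
      case False
      then have "pr0 x = Suc m" using x by auto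
      then obtain q a k where "x = Quad (Suc m) q (Some a) k" "in_A le les a" "pr0 a \<le> m"
        "(k = 0 \<and> strict le (pr1 a) q) \<or> (\<not> le (pr1 a) q \<and> les (pr1 a) q)"
        using x by (cases "(le, les, x)" rule: in_A.cases) auto
      then show ?thesis using Suc.IH by auto
    qed
  qed
qed

lemma mem_Aall_iff: "x \<in> Aall le les \<longleftrightarrow> in_A le les x"
  unfolding Aall_def by (auto simp: mem_An_iff)

fun ancestors :: "'p quad \<Rightarrow> 'p quad set" where
  "ancestors (Quad n p None k) = {Quad n p None k}"
| "ancestors (Quad n p (Some a) k) = insert (Quad n p (Some a) k) (ancestors a)"

lemma finite_ancestors: "finite (ancestors x)"
  by (induction x rule: ancestors.induct) auto

lemma size_le_if_in_ancestors: "y \<in> ancestors x \<Longrightarrow> size y \<le> size x"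
  by (induction x rule: ancestors.induct) auto

lemma closed_set_ancestors:
  assumes "closed_set le les C"
  shows "x \<in> C \<Longrightarrow> ancestors x \<subseteq> C"
proof (induction x rule: ancestors.induct)
  case (1 n p k)
  then show ?case by auto
next
  case (2 n p a k)
  then have "in_A le les (Quad n p (Some a) k)"
    using assms by (auto simp: closed_set_def mem_Aall_iff)
  then have "Quad n p (Some a) k \<notin> An le les 0" by (cases n) auto
  then have "a \<in> C" using "2.prems" assms unfolding closed_set_def by force
  then show ?case using 2 by auto
qed

lemma closed_set_lowest_ancestor_outside:
  assumes "closed_set le les C"
  shows "in_A le les x \<Longrightarrow> x \<notin> C \<Longrightarrow> \<exists>w\<in>ancestors x. w \<notin> C \<and> in_A le les w \<and>
     (\<forall>a. pr2 w = Some a \<longrightarrow> a \<in> C)"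
proof (induction x rule: ancestors.induct)
  case (1 n p k)
  then show ?case by auto
next
  case (2 n p a k)
  then show ?case by (cases "a \<in> C"; cases n) auto
qed

lemma closed_set_free_ancestor_outside:
  assumes C: "closed_set le les C" and x: "in_A le les x" "x \<notin> C"
  obtains n q par k where "Quad n q par k \<in> ancestors x" "Quad n q par k \<notin> C"
    "\<And>k'. in_A le les (Quad n q par k')"
proof -
  obtain n q par k where w: "Quad n q par k \<in> ancestors x" "Quad n q par k \<notin> C"
    "in_A le les (Quad n q par k)" "\<forall>a. par = Some a \<longrightarrow> a \<in> C"
    using closed_set_lowest_ancestor_outside[OF C x] by (metis pr2.simps quad.exhaust)
  have "in_A le les (Quad n q par k')" for k'
  proof (cases par)
    case None
    then show ?thesis using w(3) by (cases n) auto
  next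
    case (Some a)
    then obtain m where m: "n = Suc m" using w(3) by (cases n) auto
    have "a \<in> C \<inter> An le les m" using w(3,4) Some m by (simp add: mem_An_iff)
    then have "\<not> (k = 0 \<and> strict le (pr1 a) q)"
      using C w(2) Some m unfolding closed_set_def by blast
    then show ?thesis using w(3) Some m by auto
  qed
  with w(1,2) show thesis by (rule that)
qed

primrec swap_subtrees :: "'p quad \<Rightarrow> 'p quad \<Rightarrow> 'p quad \<Rightarrow> 'p quad" where
  "swap_subtrees u v (Quad n p a k) =
    (if Quad n p a k = u then v else if Quad n p a k = v then u
     else Quad n p (map_option (swap_subtrees u v) a) k)"

definition siblings :: "'p quad \<Rightarrow> 'p quad \<Rightarrow> bool" where
  "siblings u v \<longleftrightarrow> u \<noteq> v \<and> pr0 u = pr0 v \<and> pr1 u = pr1 v \<and> pr2 u = pr2 v"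

lemma swap_subtrees_left: "swap_subtrees u v u = v"
  by (cases u) simp

lemma swap_subtrees_right: "u \<noteq> v \<Longrightarrow> swap_subtrees u v v = u"
  by (cases v) simp

lemma swap_subtrees_other:
  "x \<noteq> u \<Longrightarrow> x \<noteq> v \<Longrightarrow>
    swap_subtrees u v x = Quad (pr0 x) (pr1 x) (map_option (swap_subtrees u v) (pr2 x)) (pr3 x)"
  by (cases x) simp

lemma swap_subtrees_id: "u \<notin> ancestors x \<Longrightarrow> v \<notin> ancestors x \<Longrightarrow> swap_subtrees u v x = x"
  by (induction x rule: ancestors.induct) auto

lemma swap_subtrees_moves: "u \<noteq> v \<Longrightarrow> u \<in> ancestors x \<Longrightarrow> swap_subtrees u v x \<noteq> x"
  by (induction x rule: ancestors.induct) auto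

lemma swap_siblings_parent:
  assumes "siblings u v"
  shows "map_option (swap_subtrees u v) (pr2 u) = pr2 u"
proof (cases "pr2 u")
  case (Some a)
  have "size a < size u" "size a < size v"
    using Some assms unfolding siblings_def by (cases u; cases v; simp)+
  then have "u \<notin> ancestors a" "v \<notin> ancestors a"
    using size_le_if_in_ancestors by fastforce+
  then show ?thesis using Some by (simp add: swap_subtrees_id)
qed simp

lemma swap_siblings_pr0: "siblings u v \<Longrightarrow> pr0 (swap_subtrees u v x) = pr0 x"
  by (metis siblings_def swap_subtrees_left swap_subtrees_right swap_subtrees_other pr0.simps)

lemma swap_siblings_pr1: "siblings u v \<Longrightarrow> pr1 (swap_subtrees u v x) = pr1 x"
  by (metis siblings_def swap_subtrees_left swap_subtrees_right swap_subtrees_other pr1.simps)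

lemma swap_siblings_pr2:
  "siblings u v \<Longrightarrow> pr2 (swap_subtrees u v x) = map_option (swap_subtrees u v) (pr2 x)"
  by (metis siblings_def swap_siblings_parent swap_subtrees_left swap_subtrees_right
      swap_subtrees_other pr2.simps)

lemma swap_siblings_in_A:
  assumes uv: "siblings u v" and A: "in_A le les u" "in_A le les v"
  shows "in_A le les x \<Longrightarrow> in_A le les (swap_subtrees u v x)"
proof (induction x)
  case (Quad n p a k)
  show ?case
  proof (cases "Quad n p a k = u \<or> Quad n p a k = v")
    case True
    then show ?thesis using A by (auto simp: swap_subtrees_left)
  next
    case False
    then have "swap_subtrees u v (Quad n p a k) = Quad n p (map_option (swap_subtrees u v) a) k"
      by (simp add: swap_subtrees_other)
    then show ?thesis using Quad
      by (cases n; cases a) (auto simp: swap_siblings_pr0[OF uv] swap_siblings_pr1[OF uv])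
  qed
qed

lemma swap_siblings_involution:
  assumes uv: "siblings u v"
  shows "swap_subtrees u v (swap_subtrees u v x) = x"
proof (induction x)
  case (Quad n p a k)
  let ?x = "Quad n p a k" and ?swap = "swap_subtrees u v"
  show ?case
  proof (cases "?x = u \<or> ?x = v")
    case True
    then show ?thesis using uv by (auto simp: siblings_def swap_subtrees_left swap_subtrees_right)
  next
    case False
    then have swap_x: "?swap ?x = Quad n p (map_option ?swap a) k"
      by (simp add: swap_subtrees_other)
    have inv_a: "map_option ?swap (map_option ?swap a) = a"
      using Quad.IH by (cases a) auto
    have "?swap ?x \<noteq> w" if w: "w = u \<or> w = v" for w
    proof
      assume "?swap ?x = w"
      then have parent: "map_option ?swap a = pr2 w" using swap_x by (metis pr2.simps)
      have "pr2 w = pr2 u" using w uv by (auto simp: siblings_def)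
      then have "map_option ?swap a = a"
        using parent inv_a swap_siblings_parent[OF uv] by metis
      then show False using \<open>?swap ?x = w\<close> swap_x w False by auto
    qed
    then show ?thesis using swap_x inv_a by (simp add: swap_subtrees_other)
  qed
qed

lemma Gall_if_involution:
  assumes inv: "\<And>x. f (f x) = x"
    and A: "\<And>x. in_A le les x \<Longrightarrow> in_A le les (f x)"
    and pr0: "\<And>x. pr0 (f x) = pr0 x" and pr1: "\<And>x. pr1 (f x) = pr1 x"
    and pr2: "\<And>x. pr2 (f x) = map_option f (pr2 x)"
  shows "Gall le les f"
proof -
  have bij: "bij_betw f S S" if "\<And>x. x \<in> S \<Longrightarrow> f x \<in> S" for S
    by (rule bij_betw_byWitness[where f' = f]) (use inv that in auto)
  have bij_An: "bij_betw f (An le les n) (An le les n)" for n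
    by (rule bij) (simp add: mem_An_iff A pr0)
  have "Gn le les n f" for n
    by (induction n) (simp_all only: Gn.simps bij_An pr1 pr2 simp_thms ball_triv)
  moreover have "bij_betw f (Aall le les) (Aall le les)"
    by (rule bij) (simp add: mem_Aall_iff A)
  ultimately show ?thesis by (simp add: Gall_def)
qed

lemma swap_siblings_in_Gall:
  assumes "siblings u v" "in_A le les u" "in_A le les v"
  shows "Gall le les (swap_subtrees u v)"
  using assms
  by (intro Gall_if_involution swap_siblings_involution swap_siblings_in_A
      swap_siblings_pr0 swap_siblings_pr1 swap_siblings_pr2)

theorem lemma2p4:
  fixes le :: "'p \<Rightarrow> 'p \<Rightarrow> bool" and les :: "'p \<Rightarrow> 'p \<Rightarrow> bool"
    and B :: "'p quad set" and c :: "'p quad"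
  assumes le_refl: "\<And>p. le p p"
    and le_antisym: "\<And>p q. le p q \<Longrightarrow> le q p \<Longrightarrow> p = q"
    and le_trans: "\<And>p q r. le p q \<Longrightarrow> le q r \<Longrightarrow> le p r"
    and les_refl: "\<And>p. les p p"
    and les_trans: "\<And>p q r. les p q \<Longrightarrow> les q r \<Longrightarrow> les p r"
    and le_les: "\<And>p q. le p q \<Longrightarrow> les p q"
    and B_fin: "finite B"
    and B_sub: "B \<subseteq> Aall le les"
    and c_mem: "c \<in> Aall le les - Cl le les B"
  shows "\<exists>\<pi>. Gall le les \<pi> \<and> (\<forall>b\<in>B. \<pi> b = b) \<and> \<pi> c \<noteq> c"
proof -
  obtain C where C: "closed_set le les C" "B \<subseteq> C" "c \<notin> C"
    using c_mem unfolding Cl_def by auto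
  have "in_A le les c" using c_mem by (simp add: mem_Aall_iff)
  then obtain n q par k where w: "Quad n q par k \<in> ancestors c" "Quad n q par k \<notin> C"
    "\<And>k'. in_A le les (Quad n q par k')"
    using closed_set_free_ancestor_outside[OF C(1) _ C(3)] by blast
  have "finite (insert k (pr3 ` (\<Union>b\<in>B. ancestors b)))"
    using B_fin finite_ancestors by blast
  then obtain k' where k': "k' \<notin> insert k (pr3 ` (\<Union>b\<in>B. ancestors b))"
    using ex_new_if_finite infinite_UNIV_nat by blast
  let ?w = "Quad n q par k" and ?v = "Quad n q par k'"
  have siblings: "siblings ?w ?v" using k' by (simp add: siblings_def)
  have "?w \<notin> ancestors b" "?v \<notin> ancestors b" if "b \<in> B" for b
    using closed_set_ancestors[OF C(1)] C(2) w(2) k' that by force+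
  then have "\<forall>b\<in>B. swap_subtrees ?w ?v b = b" by (simp add: swap_subtrees_id)
  moreover have "swap_subtrees ?w ?v c \<noteq> c"
    using w(1) k' by (simp add: swap_subtrees_moves)
  ultimately show ?thesis using swap_siblings_in_Gall[OF siblings w(3) w(3)] by blast
qed

end
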